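(* Let $\pi=\langle x,y,t \mid txt^{-1}=xyx^2,\ tyt^{-1}=x^{-1}\rangle$ (the fundamental group of the figure eight knot exterior) and $F=\langle x,y\rangle\le\pi$. Then the set $\{(\operatorname{tr}\rho(x),\operatorname{tr}\rho(y),\operatorname{tr}\rho(xy)) : \rho:\pi\to SL_2(\mathbb{C}) \text{ a homomorphism}\}$ equals $X_0=\{(a,a,\tfrac{a}{a-1}) : a\in\mathbb{C},\ a\neq 1\}$.
   Context: $\operatorname{tr}$ denotes the trace of a $2\times 2$ matrix. $F$ is a free group of rank two on $x,y$. *)

theory Defs
  imports "HOL-Analysis.Analysis"
begin

definition SL2 :: "(complex^2^2) set" where
  "SL2 = {A. det A = 1}"

text \<open>A homomorphism rho from pi = < x,y,t | t x t^-1 = x y x^2, t y t^-1 = x^-1 > to SL_2(C)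
  is the same as a choice of images X = rho(x), Y = rho(y), T = rho(t) in SL_2(C)
  satisfying the two defining relations (universal property of a presentation).\<close>
definition fig8_rep :: "complex^2^2 \<Rightarrow> complex^2^2 \<Rightarrow> complex^2^2 \<Rightarrow> bool" where
  "fig8_rep X Y T \<longleftrightarrow> X \<in> SL2 \<and> Y \<in> SL2 \<and> T \<in> SL2 \<and>
     T ** X ** matrix_inv T = X ** Y ** X ** X \<and>
     T ** Y ** matrix_inv T = matrix_inv X"

end

theory Submission imports Defs begin

text \<open>Conjugation by \<open>T\<close> preserves traces and is multiplicative, so the second relation gives
  \<open>tr Y = tr X\<^sup>-\<^sup>1 = tr X\<close> and the first gives \<open>tr (X Y) = tr (X Y X)\<close>. In \<open>SL\<^sub>2\<close> the
  Cayley--Hamilton identity \<open>X\<^sup>2 = (tr X) X - 1\<close> turns the latter into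
  \<open>tr (X Y) = tr X \<cdot> tr (X Y) - tr X\<close>, which forces \<open>tr X \<noteq> 1\<close> and \<open>tr (X Y) = a / (a - 1)\<close>
  for \<open>a = tr X\<close>. Conversely, writing \<open>a = \<lambda> + \<lambda>\<^sup>-\<^sup>1\<close>, take \<open>X\<close> upper and \<open>Y\<close> lower
  triangular with diagonal \<open>(\<lambda>, \<lambda>\<^sup>-\<^sup>1)\<close> and the lower corner of \<open>Y\<close> chosen to give the
  prescribed \<open>tr (X Y)\<close>; the conjugator \<open>T\<close> can then be solved for, unless that corner
  vanishes, in which case \<open>\<lambda>\<^sup>5 = 1\<close> and a diagonal (abelian) representation works.\<close>

lemma matrix_inv_invertible:
  assumes "invertible A"
  shows "A ** matrix_inv A = mat 1" "matrix_inv A ** A = mat 1"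
  using someI_ex[OF assms[unfolded invertible_def]] by (simp_all add: matrix_inv_def)

lemma matrix_inv_unique:
  fixes A :: "'a::semiring_1^'n^'m"
  assumes "A ** B = mat 1" "B ** A = mat 1"
  shows "matrix_inv A = B"
proof -
  have inv: "invertible A" using assms unfolding invertible_def by blast
  have "matrix_inv A = (B ** A) ** matrix_inv A" using assms(2) by simp
  also have "\<dots> = B" using matrix_inv_invertible(1)[OF inv] by (simp flip: matrix_mul_assoc)
  finally show ?thesis .
qed

lemma trace_conjugate:
  fixes A T :: "'a::comm_ring_1^'n^'n"
  assumes "invertible T"
  shows "trace (T ** A ** matrix_inv T) = trace A"
proof -
  have "trace (T ** A ** matrix_inv T) = trace (matrix_inv T ** (T ** A))"
    by (rule trace_mul_sym)
  also have "\<dots> = trace A"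
    using matrix_inv_invertible(2)[OF assms] by (simp add: matrix_mul_assoc)
  finally show ?thesis .
qed

lemma conjugate_mult:
  fixes A B T :: "'a::semiring_1^'n^'n"
  assumes "invertible T"
  shows "T ** (A ** B) ** matrix_inv T = (T ** A ** matrix_inv T) ** (T ** B ** matrix_inv T)"
proof -
  have "(T ** A ** matrix_inv T) ** (T ** B ** matrix_inv T)
        = T ** A ** (matrix_inv T ** T) ** B ** matrix_inv T"
    by (simp add: matrix_mul_assoc)
  then show ?thesis using matrix_inv_invertible(2)[OF assms] by (simp add: matrix_mul_assoc)
qed

definition mat2 :: "'a \<Rightarrow> 'a \<Rightarrow> 'a \<Rightarrow> 'a \<Rightarrow> 'a^2^2" where
  "mat2 a b c d = (\<chi> i j. if i = 1 then (if j = 1 then a else b) else (if j = 1 then c else d))"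

lemma mat2_nth [simp]:
  "mat2 a b c d $ 1 $ 1 = a" "mat2 a b c d $ 1 $ 2 = b"
  "mat2 a b c d $ 2 $ 1 = c" "mat2 a b c d $ 2 $ 2 = d"
  by (simp_all add: mat2_def)

lemma mat2_eq_iff: "mat2 a b c d = mat2 a' b' c' d' \<longleftrightarrow> a = a' \<and> b = b' \<and> c = c' \<and> d = d'"
  by (auto simp: vec_eq_iff forall_2 mat2_def)

lemma mat2_cases: obtains a b c d where "A = mat2 a b c d"
proof
  show "A = mat2 (A$1$1) (A$1$2) (A$2$1) (A$2$2)" by (simp add: vec_eq_iff forall_2)
qed

lemma mat2_mult [simp]:
  fixes a :: "'a::semiring_1"
  shows "mat2 a b c d ** mat2 a' b' c' d'
         = mat2 (a*a' + b*c') (a*b' + b*d') (c*a' + d*c') (c*b' + d*d')"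
  by (simp add: vec_eq_iff forall_2 matrix_matrix_mult_def sum_2)

lemma det_mat2 [simp]: "det (mat2 a b c d) = a*d - b*(c::'a::comm_ring_1)"
  by (simp add: det_2)

lemma trace_mat2 [simp]: "trace (mat2 a b c (d::'a::semiring_1)) = a + d"
  by (simp add: trace_def sum_2)

lemma mat_1_eq_mat2: "mat 1 = mat2 1 0 0 (1::'a::semiring_1)"
  by (simp add: vec_eq_iff forall_2 mat_def)

lemma matrix_inv_mat2:
  fixes a :: "'a::comm_ring_1"
  assumes "a*d - b*c = 1"
  shows "matrix_inv (mat2 a b c d) = mat2 d (-b) (-c) a"
  by (rule matrix_inv_unique) (use assms in \<open>simp_all add: mat_1_eq_mat2 mat2_eq_iff algebra_simps\<close>)

lemma invertible_det_1:
  fixes A :: "'a::comm_ring_1^2^2"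
  assumes "det A = 1"
  shows "invertible A"
proof -
  obtain a b c d where A: "A = mat2 a b c d" by (rule mat2_cases)
  then have "a*d - b*c = 1" using assms by simp
  then show ?thesis
    unfolding invertible_def A
    by (intro exI[of _ "mat2 d (-b) (-c) a"]) (simp add: mat_1_eq_mat2 mat2_eq_iff algebra_simps)
qed

lemma trace_matrix_inv_det_1:
  fixes A :: "'a::comm_ring_1^2^2"
  assumes "det A = 1"
  shows "trace (matrix_inv A) = trace A"
proof -
  obtain a b c d where A: "A = mat2 a b c d" by (rule mat2_cases)
  then have "a*d - b*c = 1" using assms by simp
  then show ?thesis unfolding A by (simp add: matrix_inv_mat2 add.commute)
qed

text \<open>The trace of the Cayley--Hamilton identity \<open>A\<^sup>2 = (tr A) A - (det A) 1\<close>, multiplied by \<open>B\<close>.\<close>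

lemma trace_mult_sandwich:
  fixes A B :: "'a::comm_ring_1^2^2"
  shows "trace (A ** B ** A) = trace A * trace (A ** B) - det A * trace B"
proof -
  obtain a b c d where A: "A = mat2 a b c d" by (rule mat2_cases)
  obtain e f g h where B: "B = mat2 e f g h" by (rule mat2_cases)
  show ?thesis unfolding A B by (simp add: algebra_simps)
qed

lemma fig8_rep_traces:
  assumes "fig8_rep X Y T"
  shows "trace Y = trace X" "trace (X ** Y) * (trace X - 1) = trace X"
proof -
  have dX: "det X = 1" and dT: "det T = 1"
    and r1: "T ** X ** matrix_inv T = X ** Y ** X ** X"
    and r2: "T ** Y ** matrix_inv T = matrix_inv X"
    using assms by (auto simp: fig8_rep_def SL2_def)
  have T: "invertible T" and X: "invertible X" using dT dX by (simp_all add: invertible_det_1)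
  show tr_Y: "trace Y = trace X"
    using trace_conjugate[OF T, of Y] r2 trace_matrix_inv_det_1[OF dX] by simp
  have "T ** (X ** Y) ** matrix_inv T = X ** Y ** X ** X ** matrix_inv X"
    using r1 r2 by (simp add: conjugate_mult[OF T])
  also have "\<dots> = X ** Y ** X"
    using matrix_inv_invertible(1)[OF X] by (simp flip: matrix_mul_assoc)
  finally have "trace (X ** Y) = trace (X ** Y ** X)"
    using trace_conjugate[OF T, of "X ** Y"] by simp
  then show "trace (X ** Y) * (trace X - 1) = trace X"
    using trace_mult_sandwich[of X Y] dX tr_Y by (simp add: algebra_simps)
qed

lemma fig8_rep_abelian:
  fixes l n :: complex
  assumes "l * n = 1" "l^5 = 1"
  shows "fig8_rep (mat2 l 0 0 n) (mat2 l 0 0 n) (mat2 0 1 (-1) 0)"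
proof -
  have inv_X: "matrix_inv (mat2 l 0 0 n) = mat2 n 0 0 l"
    using matrix_inv_mat2[of l n 0 0] assms(1) by simp
  have inv_T: "matrix_inv (mat2 0 1 (-1) 0) = mat2 0 (-1) 1 (0::complex)"
    using matrix_inv_mat2[of 0 0 1 "-1"] by simp
  show ?thesis
    unfolding fig8_rep_def SL2_def
    by (simp add: inv_X inv_T mat2_eq_iff) (use assms in algebra)
qed

text \<open>Here \<open>c\<close> is the prescribed value of \<open>tr (X Y)\<close>, and the hypothesis on \<open>s\<close> makes the
  conjugator unimodular.\<close>

lemma fig8_rep_nonabelian:
  fixes l n c r s :: complex
  assumes ln: "l * n = 1" and c: "c * (l + n - 1) = l + n"
    and r: "r = c - l^2 - n^2" and s: "s^2 * r * l = -1"
  shows "fig8_rep (mat2 l 1 0 n) (mat2 l 0 r n) (mat2 ((l^4 + r*l^2 - n) * s) s (r * l * s) 0)"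
proof -
  have dT: "(l^4 + r*l^2 - n) * s * 0 - s * (r * l * s) = 1" using s by algebra
  have inv_X: "matrix_inv (mat2 l 1 0 n) = mat2 n (-1) 0 l"
    using matrix_inv_mat2[of l n 1 0] ln by simp
  have inv_T: "matrix_inv (mat2 ((l^4 + r*l^2 - n) * s) s (r * l * s) 0)
                 = mat2 0 (-s) (-(r * l * s)) ((l^4 + r*l^2 - n) * s)"
    using matrix_inv_mat2[OF dT] by simp
  show ?thesis
    unfolding fig8_rep_def SL2_def using dT
    by (simp add: inv_X inv_T mat2_eq_iff) (use ln s c in \<open>unfold r; algebra\<close>)
qed

lemma fig8_rep_exists:
  fixes a :: complex
  assumes "a \<noteq> 1"
  obtains X Y T where "fig8_rep X Y T" "trace X = a" "trace Y = a" "trace (X ** Y) = a / (a - 1)"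
proof -
  define q where "q = csqrt (a^2 - 4)"
  define l where "l = (a + q) / 2"
  define n where "n = (a - q) / 2"
  define c where "c = a / (a - 1)"
  define r where "r = c - l^2 - n^2"
  have "q^2 = a^2 - 4" unfolding q_def by (rule power2_csqrt)
  then have ln: "l * n = 1" unfolding l_def n_def by (simp add: field_simps power2_eq_square)
  have a: "l + n = a" unfolding l_def n_def by (simp add: field_simps)
  have c: "c * (l + n - 1) = l + n" using assms a unfolding c_def by (simp add: field_simps)
  show ?thesis
  proof (cases "r = 0")
    case True
    then have c_sq: "c = l^2 + n^2" unfolding r_def by (simp add: algebra_simps)
    have "(l - 1) * (l^5 - 1) = 0" using c c_sq ln by algebra
    then have "l^5 = 1" by auto
    with ln have "fig8_rep (mat2 l 0 0 n) (mat2 l 0 0 n) (mat2 0 1 (-1) 0)"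
      by (rule fig8_rep_abelian)
    then show ?thesis
      by (rule that) (use a c_sq in \<open>simp_all add: c_def power2_eq_square\<close>)
  next
    case False
    define s where "s = 1 / csqrt (- r * l)"
    have "l \<noteq> 0" using ln by auto
    then have "s^2 * r * l = -1"
      using False unfolding s_def by (simp add: power_divide field_simps)
    with ln c r_def have "fig8_rep (mat2 l 1 0 n) (mat2 l 0 r n)
        (mat2 ((l^4 + r * l^2 - n) * s) s (r * l * s) 0)"
      by (rule fig8_rep_nonabelian)
    then show ?thesis
      by (rule that) (use a r_def in \<open>simp_all add: c_def power2_eq_square\<close>)
  qed
qed

theorem lemma6p2:
  shows "{(trace X, trace Y, trace (X ** Y)) | X Y T. fig8_rep X Y T}
       = {(a, a, a / (a - 1)) | a :: complex. a \<noteq> 1}"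
proof (intro equalityI subsetI)
  fix p assume "p \<in> {(trace X, trace Y, trace (X ** Y)) | X Y T. fig8_rep X Y T}"
  then obtain X Y T where p: "p = (trace X, trace Y, trace (X ** Y))" and rep: "fig8_rep X Y T"
    by blast
  have "trace Y = trace X" "trace (X ** Y) * (trace X - 1) = trace X"
    using fig8_rep_traces[OF rep] by simp_all
  moreover from this have "trace X \<noteq> 1" by auto
  ultimately show "p \<in> {(a, a, a / (a - 1)) | a :: complex. a \<noteq> 1}"
    using p by (auto simp: field_simps)
next
  fix p assume "p \<in> {(a, a, a / (a - 1)) | a :: complex. a \<noteq> 1}"
  then obtain a where p: "p = (a, a, a / (a - 1))" and "a \<noteq> 1" by blast
  from \<open>a \<noteq> 1\<close> obtain X Y T
    where "fig8_rep X Y T" "trace X = a" "trace Y = a" "trace (X ** Y) = a / (a - 1)"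
    by (rule fig8_rep_exists)
  then have "p = (trace X, trace Y, trace (X ** Y)) \<and> fig8_rep X Y T" using p by simp
  then show "p \<in> {(trace X, trace Y, trace (X ** Y)) | X Y T. fig8_rep X Y T}" by blast
qed

end
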